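(* The Borel measure $\nu$ on $[0,1]$ given by $d\nu=\frac{dx}{x}$ is invariant under the OOCF map $T$ (i.e. $\nu(T^{-1}A)=\nu(A)$ for every Borel $A\subseteq[0,1]$), satisfies $\nu([0,1])=\infty$, and $T$ is ergodic with respect to $\nu$.
   Context: For integers $k\ge1$ put $B(k+1,-1)=\left[\frac{k-1}{k},\frac{2k-1}{2k+1}\right]$ and $B(k,1)=\left[\frac{2k-1}{2k+1},\frac{k}{k+1}\right]$. The OOCF map $T:[0,1]\to[0,1]$ is $T(x)=\frac{kx-(k-1)}{k-(k+1)x}$ for $x\in B(k+1,-1)$, $T(x)=\frac{k-(k+1)x}{kx-(k-1)}$ for $x\in B(k,1)$ ($k\ge1$; the formulas agree at common endpoints), and $T(1)=1$. *)

theory Defs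
  imports "HOL-Analysis.Analysis"
begin

text \<open>For 0 <= x < 1 the index k >= 1 with x in [(k-1)/k, k/(k+1)) is
  k = floor (1/(1-x)); then x lies in Bminus k (first branch) or Bplus k (second branch).
  At common endpoints the two formulas agree, so this choice is immaterial. T(1) = 1.
  Values outside [0,1] are irrelevant (the measure space is [0,1]).\<close>
definition oocf_T :: "real \<Rightarrow> real" where
  "oocf_T x = (if x = 1 then 1 else
     (let k = real (nat \<lfloor>1 / (1 - x)\<rfloor>) in
       if x \<le> (2 * k - 1) / (2 * k + 1)
       then (k * x - (k - 1)) / (k - (k + 1) * x)
       else (k - (k + 1) * x) / (k * x - (k - 1))))"

text \<open>The Borel measure d nu = dx/x on [0,1] (the density at the null point 0 is irrelevant).\<close>
definition nu :: "real measure" where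
  "nu = density (restrict_space lborel {0..1}) (\<lambda>x. ennreal (1 / x))"

definition measure_preserving_map :: "'a measure \<Rightarrow> ('a \<Rightarrow> 'a) \<Rightarrow> bool" where
  "measure_preserving_map M T \<longleftrightarrow> T \<in> M \<rightarrow>\<^sub>M M \<and>
     (\<forall>A \<in> sets M. emeasure M (T -` A \<inter> space M) = emeasure M A)"

definition ergodic_map :: "'a measure \<Rightarrow> ('a \<Rightarrow> 'a) \<Rightarrow> bool" where
  "ergodic_map M T \<longleftrightarrow>
     (\<forall>A \<in> sets M. T -` A \<inter> space M = A \<longrightarrow> emeasure M A = 0 \<or> emeasure M (space M - A) = 0)"

end

theory Submission
  imports Defs
begin

text \<open>
  The map \<open>T\<close> is piecewise Moebius: its inverse branches are
  \<open>\<psi>\<^sup>-\<^sub>k(y) = (k y + k - 1) / ((k + 1) y + k)\<close> onto \<open>B(k+1,-1)\<close> and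
  \<open>\<psi>\<^sup>+\<^sub>k(y) = ((k - 1) y + k) / (k y + k + 1)\<close> onto \<open>B(k,1)\<close>, given by non-negative
  matrices of determinant \<open>\<plusminus>1\<close>.  Invariance of \<open>dx/x\<close> is the transfer-operator identity
  \<open>\<Sum>\<^sub>k |\<psi>'(y)| / \<psi>(y) = 1/y\<close>, whose terms telescope; the mass is infinite because \<open>1/x\<close> is
  not integrable at 0.

  For ergodicity, a \<open>T\<close>-invariant set \<open>A\<close> is invariant under every composition \<open>\<psi>\<close> of inverse
  branches.  The denominator \<open>c y + d\<close> of such a \<open>\<psi>\<close> varies by at most a factor 3 on \<open>[1/3,1]\<close>,
  so \<open>A\<close> fills a fixed proportion of every interval \<open>\<psi>((1/3,1))\<close>.  Orbits avoiding \<open>{0,1}\<close>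
  return to \<open>(1/3,1]\<close> infinitely often (near 0, \<open>T\<close> acts as \<open>1/x \<mapsto> 1/x - 2\<close>), and each
  return at least doubles the denominator, so these intervals shrink to the point.  A Vitali
  covering argument then shows that the complement of \<open>A\<close> is Lebesgue-null, unless \<open>A\<close> is.
\<close>

section \<open>Moebius maps of \<open>2 \<times> 2\<close> matrices\<close>

text \<open>A quadruple \<open>(a, b, c, d)\<close> stands for the matrix \<open>((a, b), (c, d))\<close> and the map
  \<open>y \<mapsto> (a y + b) / (c y + d)\<close>.\<close>

type_synonym mat2 = "real \<times> real \<times> real \<times> real"

fun mat2_moebius :: "mat2 \<Rightarrow> real \<Rightarrow> real" where
  "mat2_moebius (a, b, c, d) y = (a * y + b) / (c * y + d)"

fun mat2_denom :: "mat2 \<Rightarrow> real \<Rightarrow> real" where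
  "mat2_denom (a, b, c, d) y = c * y + d"

fun mat2_det :: "mat2 \<Rightarrow> real" where
  "mat2_det (a, b, c, d) = a * d - b * c"

fun mat2_mult :: "mat2 \<Rightarrow> mat2 \<Rightarrow> mat2" where
  "mat2_mult (a, b, c, d) (a', b', c', d') =
     (a * a' + b * c', a * b' + b * d', c * a' + d * c', c * b' + d * d')"

lemma mat2_denom_mat2_mult:
  "mat2_denom N y \<noteq> 0 \<Longrightarrow>
     mat2_denom (mat2_mult M N) y = mat2_denom M (mat2_moebius N y) * mat2_denom N y"
  by (cases M; cases N) (simp add: field_simps)

lemma mat2_moebius_mat2_mult:
  assumes "mat2_denom N y \<noteq> 0" "mat2_denom M (mat2_moebius N y) \<noteq> 0"
  shows "mat2_moebius (mat2_mult M N) y = mat2_moebius M (mat2_moebius N y)"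
proof (cases M; cases N)
  fix a b c d a' b' c' d'
  assume M: "M = (a, b, c, d)" and N: "N = (a', b', c', d')"
  define p q where "p = a' * y + b'" and "q = c' * y + d'"
  have q: "q \<noteq> 0" using assms N q_def by simp
  have "a * (p / q) + b = (a * p + b * q) / q" "c * (p / q) + d = (c * p + d * q) / q"
    using q by (simp_all add: field_simps)
  then have "mat2_moebius M (mat2_moebius N y) = ((a * p + b * q) / q) / ((c * p + d * q) / q)"
    using M N p_def q_def by simp
  also have "\<dots> = (a * p + b * q) / (c * p + d * q)" using q by simp
  also have "\<dots> = mat2_moebius (mat2_mult M N) y"
    using M N p_def q_def by (simp add: algebra_simps)
  finally show ?thesis by simp
qed

lemma mat2_moebius_diff:
  assumes "mat2_denom M y \<noteq> 0" "mat2_denom M z \<noteq> 0"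
  shows "mat2_moebius M y - mat2_moebius M z = mat2_det M * (y - z) / (mat2_denom M y * mat2_denom M z)"
proof (cases M)
  fix a b c d assume M: "M = (a, b, c, d)"
  have "c * y + d \<noteq> 0" "c * z + d \<noteq> 0" using assms M by auto
  then have "(a * y + b) / (c * y + d) - (a * z + b) / (c * z + d)
      = ((a * y + b) * (c * z + d) - (a * z + b) * (c * y + d)) / ((c * y + d) * (c * z + d))"
    by (simp add: diff_frac_eq)
  also have "(a * y + b) * (c * z + d) - (a * z + b) * (c * y + d) = (a * d - b * c) * (y - z)"
    by (simp add: algebra_simps)
  finally show ?thesis using M by simp
qed

lemma has_real_derivative_mat2_moebius:
  assumes "mat2_denom M y \<noteq> 0"
  shows "(mat2_moebius M has_real_derivative mat2_det M / (mat2_denom M y)\<^sup>2) (at y)"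
proof (cases M)
  fix a b c d assume M: "M = (a, b, c, d)"
  have "((\<lambda>y. (a * y + b) / (c * y + d)) has_real_derivative
          (a * (c * y + d) - (a * y + b) * c) / (c * y + d)\<^sup>2) (at y)"
    using assms M by (auto intro!: derivative_eq_intros simp: power2_eq_square)
  moreover have "(a * (c * y + d) - (a * y + b) * c) / (c * y + d)\<^sup>2 = mat2_det M / (mat2_denom M y)\<^sup>2"
    using M by (simp add: algebra_simps)
  moreover have "mat2_moebius M = (\<lambda>y. (a * y + b) / (c * y + d))" using M by (simp add: fun_eq_iff)
  ultimately show ?thesis by simp
qed

lemma borel_measurable_mat2_moebius [measurable]: "mat2_moebius M \<in> borel_measurable borel"
proof (cases M)
  fix a b c d assume "M = (a, b, c, d)"
  then have "mat2_moebius M = (\<lambda>y. (a * y + b) / (c * y + d))" by (simp add: fun_eq_iff)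
  then show ?thesis by simp
qed

lemma borel_measurable_mat2_denom [measurable]: "mat2_denom M \<in> borel_measurable borel"
proof (cases M)
  fix a b c d assume "M = (a, b, c, d)"
  then have "mat2_denom M = (\<lambda>y. c * y + d)" by (simp add: fun_eq_iff)
  then show ?thesis by simp
qed

lemma continuous_on_mat2_denom [continuous_intros]: "continuous_on S (mat2_denom M)"
proof (cases M)
  fix a b c d assume "M = (a, b, c, d)"
  then have "mat2_denom M = (\<lambda>y. c * y + d)" by (simp add: fun_eq_iff)
  then show ?thesis by (simp add: continuous_intros)
qed

fun nonneg_unimodular :: "mat2 \<Rightarrow> bool" where
  "nonneg_unimodular (a, b, c, d) \<longleftrightarrow>
     0 \<le> a \<and> 0 \<le> b \<and> 0 \<le> c \<and> 0 < d \<and> (a * d - b * c = 1 \<or> a * d - b * c = -1)"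

lemma nonneg_unimodular_mat2_mult:
  assumes "nonneg_unimodular M" "nonneg_unimodular N"
  shows "nonneg_unimodular (mat2_mult M N)"
proof (cases M; cases N)
  fix a b c d a' b' c' d'
  assume M: "M = (a, b, c, d)" and N: "N = (a', b', c', d')"
  have "(a * a' + b * c') * (c * b' + d * d') - (a * b' + b * d') * (c * a' + d * c')
      = (a * d - b * c) * (a' * d' - b' * c')"
    by (simp add: algebra_simps)
  moreover have "c * b' \<ge> 0" "d * d' > 0" using assms M N by auto
  then have "c * b' + d * d' > 0" by simp
  ultimately show ?thesis using assms M N by auto
qed

lemma nonneg_unimodular_det: "nonneg_unimodular M \<Longrightarrow> mat2_det M = 1 \<or> mat2_det M = -1"
  by (cases M) auto

lemma mat2_denom_pos: "nonneg_unimodular M \<Longrightarrow> 0 \<le> y \<Longrightarrow> 0 < mat2_denom M y"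
  by (cases M) (auto intro: add_nonneg_pos)

lemma mat2_denom_mono: "nonneg_unimodular M \<Longrightarrow> y \<le> z \<Longrightarrow> mat2_denom M y \<le> mat2_denom M z"
  by (cases M) (auto intro: mult_left_mono)

lemma mat2_denom_distortion: "nonneg_unimodular M \<Longrightarrow> mat2_denom M 1 \<le> 3 * mat2_denom M (1/3)"
  by (cases M) auto

lemma mat2_moebius_nonneg: "nonneg_unimodular M \<Longrightarrow> 0 \<le> y \<Longrightarrow> 0 \<le> mat2_moebius M y"
  by (cases M) (auto intro: add_nonneg_pos)

lemma mat2_mult_nonneg_unimodular_apply:
  assumes "nonneg_unimodular M" "nonneg_unimodular N" "0 \<le> y"
  shows "mat2_moebius (mat2_mult M N) y = mat2_moebius M (mat2_moebius N y)"
    and "mat2_denom (mat2_mult M N) y = mat2_denom M (mat2_moebius N y) * mat2_denom N y"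
proof -
  have "mat2_denom N y \<noteq> 0" "mat2_denom M (mat2_moebius N y) \<noteq> 0"
    using assms mat2_denom_pos mat2_moebius_nonneg by (metis less_irrefl)+
  then show "mat2_moebius (mat2_mult M N) y = mat2_moebius M (mat2_moebius N y)"
    and "mat2_denom (mat2_mult M N) y = mat2_denom M (mat2_moebius N y) * mat2_denom N y"
    by (simp_all add: mat2_moebius_mat2_mult mat2_denom_mat2_mult)
qed

lemma nn_integral_substitution_decreasing:
  fixes f :: "real \<Rightarrow> ennreal"
  assumes [measurable]: "f \<in> borel_measurable borel"
    and deriv: "\<And>x. x \<in> {a..b} \<Longrightarrow> (g has_real_derivative g' x) (at x)"
    and cont: "continuous_on {a..b} g'"
    and nonpos: "\<And>x. x \<in> {a..b} \<Longrightarrow> g' x \<le> 0"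
    and "a < b"
    and [measurable]: "g \<in> borel_measurable borel" "g' \<in> borel_measurable borel"
  shows "(\<integral>\<^sup>+x. f x * indicator {g b..g a} x \<partial>lborel) =
         (\<integral>\<^sup>+x. f (g x) * ennreal (- g' x) * indicator {a..b} x \<partial>lborel)"
proof -
  define h h' where "h x = g (- x)" and "h' x = - g' (- x)" for x
  have "(h has_real_derivative h' x) (at x)" if "x \<in> {-b..-a}" for x
  proof -
    have "(g has_real_derivative g' (- x)) (at (- x))" using deriv that by auto
    then have "((\<lambda>x. g (- x)) has_real_derivative g' (- x) * (- 1)) (at x)"
      by (rule DERIV_chain2) (auto intro!: derivative_eq_intros)
    then show ?thesis unfolding h_def h'_def by simp
  qed
  moreover have "continuous_on {-b..-a} h'"
    unfolding h'_def
    by (intro continuous_on_minus continuous_on_compose2[OF cont] continuous_intros) auto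
  moreover have "h' x \<ge> 0" if "x \<in> {-b..-a}" for x using nonpos that unfolding h'_def by auto
  ultimately have "(\<integral>\<^sup>+x. f x * indicator {h (-b)..h (-a)} x \<partial>lborel) =
      (\<integral>\<^sup>+x. f (h x) * ennreal (h' x) * indicator {-b..-a} x \<partial>lborel)"
    using nn_integral_substitution_aux[of f "-b" "-a" h h'] \<open>a < b\<close> by simp
  also have "\<dots> = (\<integral>\<^sup>+x. f (h (0 + (-1) * x)) * ennreal (h' (0 + (-1) * x)) *
                     indicator {-b..-a} (0 + (-1) * x) \<partial>lborel)"
    unfolding h_def h'_def by (subst nn_integral_real_affine[where c="-1" and t=0]) auto
  also have "\<dots> = (\<integral>\<^sup>+x. f (g x) * ennreal (- g' x) * indicator {a..b} x \<partial>lborel)"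
    unfolding h_def h'_def by (intro nn_integral_cong) (auto simp: indicator_def)
  finally show ?thesis unfolding h_def by simp
qed

lemma nn_integral_mat2_moebius_substitution:
  fixes f :: "real \<Rightarrow> ennreal"
  assumes M: "nonneg_unimodular M" and "0 \<le> a" "a < b" and [measurable]: "f \<in> borel_measurable borel"
  defines "p \<equiv> mat2_moebius M a" and "q \<equiv> mat2_moebius M b"
  shows "(\<integral>\<^sup>+z. f z * indicator {min p q..max p q} z \<partial>lborel) =
         (\<integral>\<^sup>+y. f (mat2_moebius M y) * ennreal (1 / (mat2_denom M y)\<^sup>2) * indicator {a..b} y \<partial>lborel)"
proof -
  have pos: "mat2_denom M y > 0" if "y \<in> {a..b}" for y
    using mat2_denom_pos[OF M] that \<open>0 \<le> a\<close> by simp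
  then have deriv: "(mat2_moebius M has_real_derivative mat2_det M / (mat2_denom M y)\<^sup>2) (at y)"
    if "y \<in> {a..b}" for y
    using has_real_derivative_mat2_moebius that by (metis less_irrefl)
  have cont: "continuous_on {a..b} (\<lambda>y. mat2_det M / (mat2_denom M y)\<^sup>2)"
    by (intro continuous_intros) (use pos in fastforce)
  have ends: "mat2_denom M a > 0" "mat2_denom M b > 0" using pos \<open>a < b\<close> by auto
  then have "q - p = mat2_det M * (b - a) / (mat2_denom M b * mat2_denom M a)"
    unfolding p_def q_def by (intro mat2_moebius_diff) auto
  moreover have "mat2_denom M b * mat2_denom M a > 0" using ends by simp
  ultimately consider "mat2_det M = 1" "p \<le> q" | "mat2_det M = -1" "q \<le> p"
    using nonneg_unimodular_det[OF M] \<open>a < b\<close> by (fastforce simp: field_simps)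
  then show ?thesis
  proof cases
    case 1
    then show ?thesis
      using nn_integral_substitution_aux[OF _ _ deriv cont _ \<open>a < b\<close>, of f] p_def q_def by simp
  next
    case 2
    then show ?thesis
      using nn_integral_substitution_decreasing[OF _ deriv cont _ \<open>a < b\<close>, of f] p_def q_def
      by simp
  qed
qed

lemma emeasure_mat2_moebius_image_ge:
  assumes M: "nonneg_unimodular M" and ab: "0 \<le> a" "a < b" and [measurable]: "X \<in> sets borel"
    and inv: "\<And>y. y \<in> {a..b} \<Longrightarrow> mat2_moebius M y \<in> X \<longleftrightarrow> y \<in> X"
  defines "p \<equiv> mat2_moebius M a" and "q \<equiv> mat2_moebius M b"
  shows "ennreal (1 / (mat2_denom M b)\<^sup>2) * emeasure lborel (X \<inter> {a..b}) \<le>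
         emeasure lborel (X \<inter> {min p q..max p q})"
proof -
  have "ennreal (1 / (mat2_denom M b)\<^sup>2) * emeasure lborel (X \<inter> {a..b}) =
        (\<integral>\<^sup>+y. ennreal (1 / (mat2_denom M b)\<^sup>2) * indicator (X \<inter> {a..b}) y \<partial>lborel)"
    by (simp add: nn_integral_cmult_indicator)
  also have "\<dots> \<le> (\<integral>\<^sup>+y. indicator X (mat2_moebius M y) * ennreal (1 / (mat2_denom M y)\<^sup>2) *
                          indicator {a..b} y \<partial>lborel)"
  proof (intro nn_integral_mono)
    fix y
    show "ennreal (1 / (mat2_denom M b)\<^sup>2) * indicator (X \<inter> {a..b}) y \<le>
          indicator X (mat2_moebius M y) * ennreal (1 / (mat2_denom M y)\<^sup>2) * indicator {a..b} y"
    proof (cases "y \<in> {a..b}")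
      case True
      then have "0 < mat2_denom M y" "mat2_denom M y \<le> mat2_denom M b"
        using mat2_denom_pos[OF M] mat2_denom_mono[OF M] ab by auto
      then have "1 / (mat2_denom M b)\<^sup>2 \<le> 1 / (mat2_denom M y)\<^sup>2"
        by (intro divide_left_mono power_mono) auto
      then show ?thesis using True inv[OF True] by (auto simp: indicator_def intro: ennreal_leI)
    qed (auto simp: indicator_def)
  qed
  also have "\<dots> = (\<integral>\<^sup>+z. indicator X z * indicator {min p q..max p q} z \<partial>lborel)"
    unfolding p_def q_def by (rule nn_integral_mat2_moebius_substitution[OF M ab, symmetric]) simp
  also have "\<dots> = emeasure lborel (X \<inter> {min p q..max p q})"
    by (simp add: indicator_inter_arith[symmetric])
  finally show ?thesis .
qed

section \<open>The inverse branches of the OOCF map\<close>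

definition oocf_index :: "real \<Rightarrow> nat" where
  "oocf_index x = nat \<lfloor>1 / (1 - x)\<rfloor>"

lemma oocf_index_eqI:
  assumes "1 \<le> k" "(real k - 1) / real k \<le> x" "x < real k / (real k + 1)"
  shows "oocf_index x = k"
proof -
  have "real k \<le> 1 / (1 - x)" "1 / (1 - x) < real k + 1"
    using assms by (auto simp: field_simps)
  then have "\<lfloor>1 / (1 - x)\<rfloor> = int k" by (simp add: floor_eq_iff)
  then show ?thesis by (simp add: oocf_index_def)
qed

lemma oocf_index_bounds:
  assumes "0 \<le> x" "x < 1"
  defines "k \<equiv> oocf_index x"
  shows "1 \<le> k" "(real k - 1) / real k \<le> x" "x < real k / (real k + 1)"
proof -
  have "1 \<le> 1 / (1 - x)" using assms by (simp add: field_simps)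
  then have floor: "1 \<le> \<lfloor>1 / (1 - x)\<rfloor>" by (simp add: le_floor_iff)
  then show k: "1 \<le> k" unfolding k_def oocf_index_def by linarith
  have "real k = of_int \<lfloor>1 / (1 - x)\<rfloor>"
    unfolding k_def oocf_index_def using floor by (intro of_nat_nat) linarith
  then have "real k \<le> 1 / (1 - x)" "1 / (1 - x) < real k + 1" by linarith+
  then show "(real k - 1) / real k \<le> x" "x < real k / (real k + 1)"
    using k assms by (auto simp: field_simps)
qed

lemma oocf_T_minus:
  assumes "1 \<le> k" "(real k - 1) / real k \<le> x" "x \<le> (2 * real k - 1) / (2 * real k + 1)"
  shows "oocf_T x = (real k * x - (real k - 1)) / (real k - (real k + 1) * x)"
proof -
  have "(2 * real k - 1) / (2 * real k + 1) < real k / (real k + 1)"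
    using assms(1) by (simp add: field_simps)
  then have "x < real k / (real k + 1)" using assms(3) by linarith
  then have "oocf_index x = k" "x \<noteq> 1"
    using assms oocf_index_eqI[of k x] by (auto simp: field_simps)
  then show ?thesis using assms(3) by (simp add: oocf_T_def oocf_index_def[symmetric] Let_def)
qed

lemma oocf_T_plus:
  assumes k: "1 \<le> k" and x: "(2 * real k - 1) / (2 * real k + 1) \<le> x" "x \<le> real k / (real k + 1)"
  shows "oocf_T x = (real k - (real k + 1) * x) / (real k * x - (real k - 1))"
proof -
  have mid: "(real k - 1) / real k \<le> (2 * real k - 1) / (2 * real k + 1)"
    using k by (simp add: field_simps)
  consider "x = (2 * real k - 1) / (2 * real k + 1)" | "x = real k / (real k + 1)"
    | "(2 * real k - 1) / (2 * real k + 1) < x" "x < real k / (real k + 1)"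
    using x by fastforce
  then show ?thesis
  proof cases
    txt \<open>At both endpoints \<open>oocf_T\<close> uses the other formula (with index \<open>k\<close> resp. \<open>k + 1\<close>),
      which gives the same value.\<close>
    case 1
    then have "oocf_T x = (real k * x - (real k - 1)) / (real k - (real k + 1) * x)"
      using mid oocf_T_minus[OF k] x by simp
    moreover have "real k - (real k + 1) * x = 1 / (2 * real k + 1)"
      "real k * x - (real k - 1) = 1 / (2 * real k + 1)"
      unfolding 1 by (simp_all add: field_simps)
    ultimately show ?thesis by simp
  next
    case 2
    have "(real (Suc k) - 1) / real (Suc k) \<le> x" "x \<le> (2 * real (Suc k) - 1) / (2 * real (Suc k) + 1)"
      unfolding 2 by (simp_all add: field_simps)
    then have "oocf_T x = (real (Suc k) * x - real k) / (real (Suc k) - (real (Suc k) + 1) * x)"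
      using oocf_T_minus[of "Suc k"] by simp
    moreover have "real (Suc k) * x - real k = 0" "real k - (real k + 1) * x = 0"
      unfolding 2 by (simp_all add: field_simps)
    ultimately show ?thesis by simp
  next
    case 3
    then have "(real k - 1) / real k \<le> x" using mid by simp
    then have "oocf_index x = k" "x \<noteq> 1" using oocf_index_eqI[OF k] 3 by auto
    then show ?thesis using 3 by (simp add: oocf_T_def oocf_index_def[symmetric] Let_def)
  qed
qed

definition oocf_inv_minus :: "nat \<Rightarrow> mat2" where
  "oocf_inv_minus k = (real k, real k - 1, real k + 1, real k)"

definition oocf_inv_plus :: "nat \<Rightarrow> mat2" where
  "oocf_inv_plus k = (real k - 1, real k, real k, real k + 1)"

lemma mat2_moebius_oocf_inv_minus:
  assumes k: "1 \<le> k" and y: "0 \<le> y" "y \<le> 1"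
  defines "x \<equiv> mat2_moebius (oocf_inv_minus k) y"
  shows "(real k - 1) / real k \<le> x" "x \<le> (2 * real k - 1) / (2 * real k + 1)" "oocf_T x = y"
proof -
  define r where "r = real k"
  have r: "1 \<le> r" using k r_def by simp
  have D: "0 < (r + 1) * y + r" using r y by (simp add: add_nonneg_pos)
  have x: "x = (r * y + (r - 1)) / ((r + 1) * y + r)"
    by (simp add: x_def oocf_inv_minus_def r_def)
  have "(r - 1) * ((r + 1) * y + r) \<le> (r * y + (r - 1)) * r"
    "(r * y + (r - 1)) * (2 * r + 1) \<le> (2 * r - 1) * ((r + 1) * y + r)"
    using y by (simp_all add: algebra_simps)
  then show lo: "(real k - 1) / real k \<le> x" and hi: "x \<le> (2 * real k - 1) / (2 * real k + 1)"
    using D r unfolding x r_def[symmetric] by (simp_all add: divide_simps)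
  have "r * x - (r - 1) = y / ((r + 1) * y + r)" "r - (r + 1) * x = 1 / ((r + 1) * y + r)"
    using D by (simp_all add: x field_simps)
  then show "oocf_T x = y" using oocf_T_minus[OF k lo hi] D r_def by simp
qed

lemma mat2_moebius_oocf_inv_plus:
  assumes k: "1 \<le> k" and y: "0 \<le> y" "y \<le> 1"
  defines "x \<equiv> mat2_moebius (oocf_inv_plus k) y"
  shows "(2 * real k - 1) / (2 * real k + 1) \<le> x" "x \<le> real k / (real k + 1)" "oocf_T x = y"
proof -
  define r where "r = real k"
  have r: "1 \<le> r" using k r_def by simp
  have D: "0 < r * y + (r + 1)" using r y by (simp add: add_nonneg_pos)
  have x: "x = ((r - 1) * y + r) / (r * y + (r + 1))"
    by (simp add: x_def oocf_inv_plus_def r_def)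
  have "(2 * r - 1) * (r * y + (r + 1)) \<le> ((r - 1) * y + r) * (2 * r + 1)"
    "((r - 1) * y + r) * (r + 1) \<le> r * (r * y + (r + 1))"
    using y by (simp_all add: algebra_simps)
  then show lo: "(2 * real k - 1) / (2 * real k + 1) \<le> x" and hi: "x \<le> real k / (real k + 1)"
    using D r unfolding x r_def[symmetric] by (simp_all add: divide_simps)
  have "r - (r + 1) * x = y / (r * y + (r + 1))" "r * x - (r - 1) = 1 / (r * y + (r + 1))"
    using D by (simp_all add: x field_simps)
  then show "oocf_T x = y" using oocf_T_plus[OF k lo hi] D r_def by simp
qed

definition oocf_inv_branches :: "mat2 set" where
  "oocf_inv_branches = {oocf_inv_minus k | k. 1 \<le> k} \<union> {oocf_inv_plus k | k. 1 \<le> k}"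

lemma oocf_inv_branchesE:
  assumes "B \<in> oocf_inv_branches"
  obtains k where "1 \<le> k" "B = oocf_inv_minus k \<or> B = oocf_inv_plus k"
  using assms unfolding oocf_inv_branches_def by blast

lemma nonneg_unimodular_oocf_inv_branch: "B \<in> oocf_inv_branches \<Longrightarrow> nonneg_unimodular B"
  by (erule oocf_inv_branchesE) (auto simp: oocf_inv_minus_def oocf_inv_plus_def algebra_simps)

lemma oocf_T_oocf_inv_branch:
  "B \<in> oocf_inv_branches \<Longrightarrow> y \<in> {0..1} \<Longrightarrow> oocf_T (mat2_moebius B y) = y"
  by (erule oocf_inv_branchesE) (auto simp: mat2_moebius_oocf_inv_minus(3) mat2_moebius_oocf_inv_plus(3))

lemma oocf_inv_branch_in_unit:
  assumes "B \<in> oocf_inv_branches" "y \<in> {0..1}"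
  shows "mat2_moebius B y \<in> {0..<1}"
proof -
  obtain k where k: "1 \<le> k" and B: "B = oocf_inv_minus k \<or> B = oocf_inv_plus k"
    using assms(1) by (rule oocf_inv_branchesE)
  have "0 \<le> (real k - 1) / real k" "(2 * real k - 1) / (2 * real k + 1) < 1"
    "0 \<le> (2 * real k - 1) / (2 * real k + 1)" "real k / (real k + 1) < 1"
    using k by simp_all
  then show ?thesis
    using B assms(2) mat2_moebius_oocf_inv_minus(1,2)[OF k, of y] mat2_moebius_oocf_inv_plus(1,2)[OF k, of y]
    by (auto intro: order_trans le_less_trans)
qed

lemma oocf_inv_minus_oocf_T:
  assumes k: "1 \<le> k" and x: "(real k - 1) / real k \<le> x" "x \<le> (2 * real k - 1) / (2 * real k + 1)"
  shows "oocf_T x \<in> {0..1}" "mat2_moebius (oocf_inv_minus k) (oocf_T x) = x"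
proof -
  define r where "r = real k"
  have r: "1 \<le> r" using k r_def by simp
  have lo: "r - 1 \<le> r * x" and hi: "(2 * r + 1) * x \<le> 2 * r - 1"
    using x r unfolding r_def[symmetric] by (simp_all add: field_simps)
  have "(2 * r - 1) / (2 * r + 1) < r / (r + 1)" using r by (simp add: field_simps)
  then have "x < r / (r + 1)" using x r_def by simp
  then have d: "0 < r - (r + 1) * x" using r by (simp add: field_simps)
  have T: "oocf_T x = (r * x - (r - 1)) / (r - (r + 1) * x)"
    using oocf_T_minus[OF k x] r_def by simp
  show "oocf_T x \<in> {0..1}" using lo hi d by (simp add: T field_simps)
  show "mat2_moebius (oocf_inv_minus k) (oocf_T x) = x"
    using d by (simp add: T oocf_inv_minus_def r_def[symmetric] field_simps)
qed

lemma oocf_inv_plus_oocf_T: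
  assumes k: "1 \<le> k" and x: "(2 * real k - 1) / (2 * real k + 1) \<le> x" "x \<le> real k / (real k + 1)"
  shows "oocf_T x \<in> {0..1}" "mat2_moebius (oocf_inv_plus k) (oocf_T x) = x"
proof -
  define r where "r = real k"
  have r: "1 \<le> r" using k r_def by simp
  have lo: "2 * r - 1 \<le> (2 * r + 1) * x" and hi: "(r + 1) * x \<le> r"
    using x r unfolding r_def[symmetric] by (simp_all add: field_simps)
  have "(r - 1) / r < (2 * r - 1) / (2 * r + 1)" using r by (simp add: field_simps)
  then have "(r - 1) / r < x" using x r_def by simp
  then have d: "0 < r * x - (r - 1)" using r by (simp add: field_simps)
  have T: "oocf_T x = (r - (r + 1) * x) / (r * x - (r - 1))"
    using oocf_T_plus[OF k x] r_def by simp
  show "oocf_T x \<in> {0..1}" using lo hi d by (simp add: T field_simps)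
  show "mat2_moebius (oocf_inv_plus k) (oocf_T x) = x"
    using d by (simp add: T oocf_inv_plus_def r_def[symmetric] field_simps)
qed

definition oocf_branch :: "real \<Rightarrow> mat2" where
  "oocf_branch x = (let k = oocf_index x in
     if x \<le> (2 * real k - 1) / (2 * real k + 1) then oocf_inv_minus k else oocf_inv_plus k)"

lemma oocf_branch_oocf_T:
  assumes "0 \<le> x" "x < 1"
  shows "oocf_branch x \<in> oocf_inv_branches" "oocf_T x \<in> {0..1}"
    "mat2_moebius (oocf_branch x) (oocf_T x) = x"
proof -
  define k where "k = oocf_index x"
  note k = oocf_index_bounds[OF assms, folded k_def]
  show "oocf_branch x \<in> oocf_inv_branches"
    using k(1) by (auto simp: oocf_branch_def k_def[symmetric] Let_def oocf_inv_branches_def)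
  show "oocf_T x \<in> {0..1}" "mat2_moebius (oocf_branch x) (oocf_T x) = x"
  proof (atomize(full), cases "x \<le> (2 * real k - 1) / (2 * real k + 1)")
    case True
    then show "oocf_T x \<in> {0..1} \<and> mat2_moebius (oocf_branch x) (oocf_T x) = x"
      using oocf_inv_minus_oocf_T[OF k(1,2) True] by (simp add: oocf_branch_def k_def[symmetric])
  next
    case False
    then show "oocf_T x \<in> {0..1} \<and> mat2_moebius (oocf_branch x) (oocf_T x) = x"
      using oocf_inv_plus_oocf_T[OF k(1) _ less_imp_le[OF k(3)]]
      by (simp add: oocf_branch_def k_def[symmetric])
  qed
qed

lemma oocf_T_in_unit: "x \<in> {0..1} \<Longrightarrow> oocf_T x \<in> {0..1}"
  using oocf_branch_oocf_T(2)[of x] by (cases "x = 1") (auto simp: oocf_T_def)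

lemma oocf_T_small: "0 \<le> x \<Longrightarrow> x \<le> 1/3 \<Longrightarrow> oocf_T x = x / (1 - 2 * x)"
  using oocf_T_minus[of 1 x] by simp

lemma mat2_denom_oocf_branch:
  assumes "0 \<le> x" "x < 1" "0 \<le> z"
  shows "(if 1/3 < x then 2 else 1) \<le> mat2_denom (oocf_branch x) z"
proof -
  define k where "k = oocf_index x"
  have k: "1 \<le> k" using oocf_index_bounds[OF assms(1,2)] k_def by simp
  have "2 \<le> mat2_denom (oocf_inv_plus k) z" "real k \<le> mat2_denom (oocf_inv_minus k) z"
    using k assms(3) by (simp_all add: oocf_inv_plus_def oocf_inv_minus_def add_increasing)
  moreover have "2 \<le> k" if "1/3 < x" "oocf_branch x = oocf_inv_minus k"
  proof (rule ccontr)
    assume "\<not> 2 \<le> k"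
    then have "k = 1" using k by simp
    then show False using that by (simp add: oocf_branch_def k_def[symmetric] oocf_inv_minus_def
        oocf_inv_plus_def split: if_splits)
  qed
  moreover have "oocf_branch x = oocf_inv_minus k \<or> oocf_branch x = oocf_inv_plus k"
    by (simp add: oocf_branch_def k_def[symmetric] Let_def)
  ultimately show ?thesis using k by (auto split: if_splits)
qed

inductive_set oocf_inv_words :: "mat2 set" where
  oocf_inv_words_id: "(1, 0, 0, 1) \<in> oocf_inv_words"
| oocf_inv_words_mult: "B \<in> oocf_inv_branches \<Longrightarrow> M \<in> oocf_inv_words \<Longrightarrow> mat2_mult B M \<in> oocf_inv_words"

lemma nonneg_unimodular_oocf_inv_word: "M \<in> oocf_inv_words \<Longrightarrow> nonneg_unimodular M"
  by (induction rule: oocf_inv_words.induct)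
     (simp_all add: nonneg_unimodular_mat2_mult nonneg_unimodular_oocf_inv_branch)

lemma oocf_inv_word_mult_apply:
  assumes "B \<in> oocf_inv_branches" "M \<in> oocf_inv_words" "0 \<le> y"
  shows "mat2_moebius (mat2_mult B M) y = mat2_moebius B (mat2_moebius M y)"
  using mat2_mult_nonneg_unimodular_apply(1)[OF nonneg_unimodular_oocf_inv_branch
      nonneg_unimodular_oocf_inv_word] assms by blast

lemma oocf_inv_word_in_unit:
  "M \<in> oocf_inv_words \<Longrightarrow> y \<in> {0..1} \<Longrightarrow> mat2_moebius M y \<in> {0..1}"
proof (induction arbitrary: y rule: oocf_inv_words.induct)
  case (oocf_inv_words_mult B M)
  then have "mat2_moebius B (mat2_moebius M y) \<in> {0..<1}"
    using oocf_inv_branch_in_unit by blast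
  then show ?case using oocf_inv_word_mult_apply oocf_inv_words_mult by simp
qed simp

lemma oocf_inv_word_invariant:
  assumes A: "\<And>x. x \<in> {0..1} \<Longrightarrow> oocf_T x \<in> A \<longleftrightarrow> x \<in> A"
  shows "M \<in> oocf_inv_words \<Longrightarrow> y \<in> {0..1} \<Longrightarrow> mat2_moebius M y \<in> A \<longleftrightarrow> y \<in> A"
proof (induction arbitrary: y rule: oocf_inv_words.induct)
  case (oocf_inv_words_mult B M)
  define z where "z = mat2_moebius M y"
  have z: "z \<in> {0..1}" using oocf_inv_word_in_unit oocf_inv_words_mult z_def by blast
  have "mat2_moebius B z \<in> {0..<1}" "oocf_T (mat2_moebius B z) = z"
    using oocf_inv_branch_in_unit oocf_T_oocf_inv_branch oocf_inv_words_mult(1) z by blast+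
  then have "mat2_moebius B z \<in> A \<longleftrightarrow> z \<in> A" using A[of "mat2_moebius B z"] by simp
  then show ?case using oocf_inv_word_mult_apply oocf_inv_words_mult z_def by simp
qed simp

section \<open>Regular orbits and cylinders\<close>

definition oocf_regular :: "real \<Rightarrow> bool" where
  "oocf_regular x \<longleftrightarrow> x \<in> {0..1} \<and> (\<forall>i. (oocf_T ^^ i) x \<notin> {0, 1})"

lemma oocf_regular_in_open_unit: "oocf_regular x \<Longrightarrow> 0 < x \<and> x < 1"
  unfolding oocf_regular_def by (metis atLeastAtMost_iff funpow_0 insertCI less_eq_real_def)

lemma oocf_regular_oocf_T: "oocf_regular x \<Longrightarrow> oocf_regular (oocf_T x)"
  unfolding oocf_regular_def using oocf_T_in_unit by (metis comp_apply funpow_Suc_right)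

lemma oocf_regular_iterate: "oocf_regular x \<Longrightarrow> oocf_regular ((oocf_T ^^ n) x)"
  by (induction n) (simp_all add: oocf_regular_oocf_T)

fun oocf_cylinder :: "nat \<Rightarrow> real \<Rightarrow> mat2" where
  "oocf_cylinder 0 x = (1, 0, 0, 1)"
| "oocf_cylinder (Suc n) x = mat2_mult (oocf_branch x) (oocf_cylinder n (oocf_T x))"

fun oocf_visits :: "nat \<Rightarrow> real \<Rightarrow> nat" where
  "oocf_visits 0 x = 0"
| "oocf_visits (Suc n) x = (if 1/3 < x then 1 else 0) + oocf_visits n (oocf_T x)"

lemma oocf_cylinder_in_words: "oocf_regular x \<Longrightarrow> oocf_cylinder n x \<in> oocf_inv_words"
proof (induction n arbitrary: x)
  case (Suc n)
  then show ?case
    using oocf_branch_oocf_T(1) oocf_regular_in_open_unit oocf_regular_oocf_T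
    by (simp add: oocf_inv_words_mult less_imp_le)
qed (simp add: oocf_inv_words_id)

lemma mat2_moebius_oocf_cylinder:
  "oocf_regular x \<Longrightarrow> mat2_moebius (oocf_cylinder n x) ((oocf_T ^^ n) x) = x"
proof (induction n arbitrary: x)
  case (Suc n)
  have x: "0 \<le> x" "x < 1" using oocf_regular_in_open_unit[OF Suc.prems(1)] by auto
  have Tx: "oocf_regular (oocf_T x)" using oocf_regular_oocf_T Suc.prems by blast
  then have "0 \<le> (oocf_T ^^ n) (oocf_T x)"
    using oocf_regular_iterate oocf_regular_in_open_unit less_imp_le by blast
  moreover have "(oocf_T ^^ Suc n) x = (oocf_T ^^ n) (oocf_T x)"
    by (simp only: funpow_Suc_right comp_apply)
  ultimately have "mat2_moebius (oocf_cylinder (Suc n) x) ((oocf_T ^^ Suc n) x) =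
      mat2_moebius (oocf_branch x) (mat2_moebius (oocf_cylinder n (oocf_T x)) ((oocf_T ^^ n) (oocf_T x)))"
    using oocf_inv_word_mult_apply oocf_branch_oocf_T(1)[OF x] oocf_cylinder_in_words[OF Tx] by simp
  also have "\<dots> = x" using Suc.IH[OF Tx] oocf_branch_oocf_T(3)[OF x] by simp
  finally show ?case .
qed simp

lemma mat2_denom_oocf_cylinder:
  "oocf_regular x \<Longrightarrow> z \<in> {0..1} \<Longrightarrow> 2 ^ oocf_visits n x \<le> mat2_denom (oocf_cylinder n x) z"
proof (induction n arbitrary: x)
  case (Suc n)
  define B M where "B = oocf_branch x" and "M = oocf_cylinder n (oocf_T x)"
  have x: "0 \<le> x" "x < 1" using oocf_regular_in_open_unit[OF Suc.prems(1)] by auto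
  have Tx: "oocf_regular (oocf_T x)" using oocf_regular_oocf_T Suc.prems by blast
  have M: "M \<in> oocf_inv_words" using oocf_cylinder_in_words[OF Tx] M_def by simp
  have d: "mat2_denom (mat2_mult B M) z = mat2_denom B (mat2_moebius M z) * mat2_denom M z"
    using mat2_mult_nonneg_unimodular_apply(2) nonneg_unimodular_oocf_inv_branch
      nonneg_unimodular_oocf_inv_word oocf_branch_oocf_T(1)[OF x] M Suc.prems(2) B_def by simp
  have "(if 1/3 < x then 2 else 1) \<le> mat2_denom B (mat2_moebius M z)"
    using mat2_denom_oocf_branch x oocf_inv_word_in_unit[OF M Suc.prems(2)] B_def by simp
  moreover have "2 ^ oocf_visits n (oocf_T x) \<le> mat2_denom M z"
    using Suc.IH[OF Tx Suc.prems(2)] M_def by simp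
  ultimately have "(if 1/3 < x then 2 else 1) * 2 ^ oocf_visits n (oocf_T x) \<le>
      mat2_denom B (mat2_moebius M z) * mat2_denom M z"
    by (intro mult_mono) (auto split: if_splits)
  then show ?case using d by (simp add: B_def M_def power_add split: if_splits)
qed simp

lemma inverse_oocf_T_iterate_small:
  assumes "0 < y" "\<forall>l\<le>m. (oocf_T ^^ l) y \<le> 1/3"
  shows "0 < (oocf_T ^^ m) y \<and> 1 / (oocf_T ^^ m) y = 1 / y - 2 * real m"
  using assms(2)
proof (induction m)
  case (Suc m)
  define u where "u = (oocf_T ^^ m) y"
  have u: "0 < u" "1 / u = 1 / y - 2 * real m" "u \<le> 1/3" using Suc u_def by auto
  then have "(oocf_T ^^ Suc m) y = u / (1 - 2 * u)" using oocf_T_small[of u] u_def by simp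
  moreover have "0 < u / (1 - 2 * u)" "1 / (u / (1 - 2 * u)) = 1 / u - 2"
    using u by (simp_all add: field_simps)
  ultimately show ?case using u by simp
qed (use assms in simp)

lemma oocf_regular_returns:
  assumes "oocf_regular x"
  shows "\<exists>j\<ge>i. 1/3 < (oocf_T ^^ j) x"
proof (rule ccontr)
  assume never: "\<not> ?thesis"
  define y where "y = (oocf_T ^^ i) x"
  have "(oocf_T ^^ l) y = (oocf_T ^^ (l + i)) x" for l by (simp add: y_def funpow_add)
  then have "\<forall>l. (oocf_T ^^ l) y \<le> 1/3" using never by (metis le_add2 not_less)
  moreover have y: "0 < y"
    using oocf_regular_in_open_unit[OF oocf_regular_iterate[OF assms]] y_def by simp
  moreover define m where "m = nat \<lceil>1 / y\<rceil>"
  ultimately have "0 < (oocf_T ^^ m) y \<and> 1 / (oocf_T ^^ m) y = 1 / y - 2 * real m"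
    using inverse_oocf_T_iterate_small[of y m] by blast
  then have "0 < 1 / y - 2 * real m" by (metis zero_less_divide_1_iff)
  moreover have "1 / y \<le> real m" "0 < 1 / y" using y by (auto simp: m_def)
  ultimately show False by linarith
qed

lemma oocf_visits_Suc_right:
  "oocf_visits (Suc n) x = oocf_visits n x + (if 1/3 < (oocf_T ^^ n) x then 1 else 0)"
  by (induction n arbitrary: x) (simp_all add: funpow_Suc_right del: funpow.simps)

lemma oocf_visits_mono: "m \<le> n \<Longrightarrow> oocf_visits m x \<le> oocf_visits n x"
proof (induction n rule: dec_induct)
  case (step n)
  then show ?case unfolding oocf_visits_Suc_right by simp
qed simp

lemma oocf_regular_many_visits:
  assumes "oocf_regular x"
  shows "\<exists>j. N \<le> oocf_visits j x \<and> 1/3 < (oocf_T ^^ j) x"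
proof (induction N)
  case 0
  then show ?case using oocf_regular_returns[OF assms, of 0] by auto
next
  case (Suc N)
  then obtain j where "N \<le> oocf_visits j x" "1/3 < (oocf_T ^^ j) x" by auto
  then have "Suc N \<le> oocf_visits (Suc j) x" unfolding oocf_visits_Suc_right by simp
  moreover obtain j' where "Suc j \<le> j'" "1/3 < (oocf_T ^^ j') x"
    using oocf_regular_returns[OF assms] by blast
  ultimately show ?case using oocf_visits_mono[of "Suc j" j' x] by (intro exI[of _ j']) auto
qed

lemma countable_oocf_T_preimage:
  assumes "countable Q"
  shows "countable {x \<in> {0..1}. oocf_T x \<in> Q}"
proof (rule countable_subset)
  show "{x \<in> {0..1}. oocf_T x \<in> Q} \<subseteq> {1} \<union> (\<Union>B\<in>oocf_inv_branches. mat2_moebius B ` Q)"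
  proof
    fix x assume x: "x \<in> {x \<in> {0..1}. oocf_T x \<in> Q}"
    show "x \<in> {1} \<union> (\<Union>B\<in>oocf_inv_branches. mat2_moebius B ` Q)"
    proof (cases "x = 1")
      case False
      then have "0 \<le> x" "x < 1" using x by auto
      then show ?thesis using oocf_branch_oocf_T[of x] x by (metis (no_types, lifting) UN_iff UnI2 imageI mem_Collect_eq)
    qed simp
  qed
  have "countable oocf_inv_branches" unfolding oocf_inv_branches_def by (simp add: setcompr_eq_image)
  then show "countable ({1} \<union> (\<Union>B\<in>oocf_inv_branches. mat2_moebius B ` Q))"
    using assms by auto
qed

lemma countable_not_oocf_regular: "countable {x \<in> {0..1}. \<not> oocf_regular x}"
proof -
  define P where "P i = {x \<in> {0..1::real}. (oocf_T ^^ i) x \<in> {0, 1}}" for i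
  have P: "countable (P i)" for i
  proof (induction i)
    case 0
    have "P 0 \<subseteq> {0, 1}" unfolding P_def by auto
    then show ?case by (rule countable_subset) simp
  next
    case (Suc i)
    have "P (Suc i) \<subseteq> {x \<in> {0..1}. oocf_T x \<in> P i}"
      unfolding P_def using oocf_T_in_unit by (auto simp: funpow_Suc_right simp del: funpow.simps)
    then show ?case using countable_oocf_T_preimage[OF Suc] countable_subset by blast
  qed
  have "{x \<in> {0..1}. \<not> oocf_regular x} \<subseteq> (\<Union>i. P i)"
    unfolding oocf_regular_def P_def by blast
  moreover have "countable (\<Union>i. P i)" using P by (intro countable_UN) auto
  ultimately show ?thesis by (rule countable_subset)
qed

section \<open>Invariance and infinite mass of \<open>dx/x\<close>\<close>

lemma space_nu [simp]: "space nu = {0..1}"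
  by (simp add: nu_def space_restrict_space)

lemma sets_nu: "A \<in> sets nu \<longleftrightarrow> A \<subseteq> {0..1} \<and> A \<in> sets borel"
  using sets_restrict_space_iff[of "{0..1::real}" lborel A] by (simp add: nu_def)

lemma emeasure_nu:
  assumes "A \<in> sets nu"
  shows "emeasure nu A = (\<integral>\<^sup>+x. ennreal (1 / x) * indicator A x \<partial>lborel)"
proof -
  have A: "A \<subseteq> {0..1}" "A \<in> sets (restrict_space lborel {0..1})"
    using assms sets_nu by (auto simp: nu_def)
  have "(\<lambda>x. ennreal (1 / x)) \<in> borel_measurable (restrict_space lborel {0..1})"
    by (intro measurable_restrict_space1) measurable
  then have "emeasure nu A =
      (\<integral>\<^sup>+x. ennreal (1 / x) * indicator A x \<partial>restrict_space lborel {0..1})"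
    unfolding nu_def using A(2) by (rule emeasure_density)
  also have "\<dots> = (\<integral>\<^sup>+x. ennreal (1 / x) * indicator A x * indicator {0..1} x \<partial>lborel)"
    by (subst nn_integral_restrict_space) auto
  also have "\<dots> = (\<integral>\<^sup>+x. ennreal (1 / x) * indicator A x \<partial>lborel)"
    using A(1) by (intro nn_integral_cong) (auto simp: indicator_def)
  finally show ?thesis .
qed

lemma emeasure_nu_eq_0:
  assumes "A \<in> sets nu" "emeasure lborel A = 0"
  shows "emeasure nu A = 0"
proof -
  have "A \<in> null_sets lborel" using assms by (simp add: sets_nu null_sets_def)
  then have "(\<integral>\<^sup>+x. ennreal (1 / x) * indicator A x \<partial>lborel) = 0"
    by (rule nn_integral_null_set)
  then show ?thesis using emeasure_nu[OF assms(1)] by simp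
qed

lemma borel_measurable_oocf_T [measurable]: "oocf_T \<in> borel_measurable borel"
  unfolding oocf_T_def Let_def by measurable

lemma measurable_oocf_T_nu: "oocf_T \<in> nu \<rightarrow>\<^sub>M nu"
proof -
  have "oocf_T \<in> restrict_space lborel {0..1} \<rightarrow>\<^sub>M lborel"
    by (intro measurable_restrict_space1) simp
  then have "oocf_T \<in> restrict_space lborel {0..1} \<rightarrow>\<^sub>M restrict_space lborel {0..1::real}"
    using oocf_T_in_unit by (intro measurable_restrict_space2) (auto simp: space_restrict_space)
  moreover have "nu \<rightarrow>\<^sub>M nu = restrict_space lborel {0..1} \<rightarrow>\<^sub>M restrict_space lborel {0..1::real}"
    unfolding nu_def by (rule measurable_cong_sets) simp_all
  ultimately show ?thesis by simp
qed

lemma emeasure_nu_unit_interval: "emeasure nu {0..1} = \<infinity>"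
proof -
  have le: "ennreal (real n) \<le> emeasure nu {0..1}" for n
  proof -
    define a where "a = exp (- real n)"
    have a: "0 < a" "a \<le> 1" unfolding a_def by auto
    have "(\<integral>\<^sup>+x. ennreal (1 / x) * indicator {a..1} x \<partial>lborel) = ennreal (ln 1 - ln a)"
    proof (rule nn_integral_FTC_Icc)
      show "(\<lambda>x::real. 1 / x) \<in> borel_measurable borel" by measurable
      fix x assume "x \<in> {a..1}"
      then have "0 < x" using a by simp
      then show "DERIV ln x :> 1 / x" "0 \<le> 1 / x" by (auto intro!: derivative_eq_intros)
    qed (use a in simp)
    also have "ln 1 - ln a = real n" unfolding a_def by simp
    finally have "ennreal (real n) = (\<integral>\<^sup>+x. ennreal (1 / x) * indicator {a..1} x \<partial>lborel)" ..
    also have "\<dots> \<le> (\<integral>\<^sup>+x. ennreal (1 / x) * indicator {0..1} x \<partial>lborel)"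
      using a by (intro nn_integral_mono) (auto simp: indicator_def)
    also have "\<dots> = emeasure nu {0..1}" by (simp add: emeasure_nu sets_nu)
    finally show ?thesis .
  qed
  show ?thesis
  proof (rule ccontr)
    assume "emeasure nu {0..1} \<noteq> \<infinity>"
    then obtain n where "emeasure nu {0..1} < of_nat n"
      using ennreal_Ex_less_of_nat by (auto simp: top.not_eq_extremum)
    then show False using le[of n] by (simp add: ennreal_of_nat_eq_real_of_nat)
  qed
qed

definition oocf_piece_minus :: "nat \<Rightarrow> real set" where
  "oocf_piece_minus k = {(real k - 1) / real k ..< (2 * real k - 1) / (2 * real k + 1)}"

definition oocf_piece_plus :: "nat \<Rightarrow> real set" where
  "oocf_piece_plus k = {(2 * real k - 1) / (2 * real k + 1) ..< real k / (real k + 1)}"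

lemma borel_oocf_piece [measurable]: "oocf_piece_minus k \<in> sets borel" "oocf_piece_plus k \<in> sets borel"
  by (simp_all add: oocf_piece_minus_def oocf_piece_plus_def)

lemma oocf_piece_iff_oocf_index:
  assumes "0 \<le> z" "z < 1" "1 \<le> k"
  shows "z \<in> oocf_piece_minus k \<or> z \<in> oocf_piece_plus k \<longleftrightarrow> oocf_index z = k"
proof -
  have "(real k - 1) / real k \<le> (2 * real k - 1) / (2 * real k + 1)"
    "(2 * real k - 1) / (2 * real k + 1) \<le> real k / (real k + 1)"
    using assms(3) by (simp_all add: field_simps)
  then have "z \<in> oocf_piece_minus k \<or> z \<in> oocf_piece_plus k \<longleftrightarrow>
      (real k - 1) / real k \<le> z \<and> z < real k / (real k + 1)"
    unfolding oocf_piece_minus_def oocf_piece_plus_def by auto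
  then show ?thesis
    using oocf_index_eqI[OF assms(3)] oocf_index_bounds[OF assms(1,2)] by auto
qed

lemma suminf_oocf_pieces:
  fixes f :: "real \<Rightarrow> ennreal"
  shows "(\<Sum>n. f z * indicator (oocf_piece_minus (Suc n)) z + f z * indicator (oocf_piece_plus (Suc n)) z)
         = f z * indicator {0..<1} z"
proof (cases "0 \<le> z \<and> z < 1")
  case True
  define n0 where "n0 = oocf_index z - 1"
  have n0: "oocf_index z = Suc n0" using oocf_index_bounds(1)[of z] True n0_def by simp
  have disj: "oocf_piece_minus k \<inter> oocf_piece_plus k = {}" for k
    by (auto simp: oocf_piece_minus_def oocf_piece_plus_def)
  have "(\<Sum>n. f z * indicator (oocf_piece_minus (Suc n)) z + f z * indicator (oocf_piece_plus (Suc n)) z)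
      = (\<Sum>n\<in>{n0}. f z * indicator (oocf_piece_minus (Suc n)) z + f z * indicator (oocf_piece_plus (Suc n)) z)"
  proof (rule suminf_finite)
    fix n assume "n \<notin> {n0}"
    then have "z \<notin> oocf_piece_minus (Suc n)" "z \<notin> oocf_piece_plus (Suc n)"
      using oocf_piece_iff_oocf_index[of z "Suc n"] True n0 by auto
    then show "f z * indicator (oocf_piece_minus (Suc n)) z + f z * indicator (oocf_piece_plus (Suc n)) z = 0"
      by simp
  qed simp
  also have "\<dots> = f z"
    using oocf_piece_iff_oocf_index[of z "Suc n0"] True n0 disj[of "Suc n0"] by (auto simp: indicator_def)
  finally show ?thesis using True by simp
next
  case False
  have "z \<notin> oocf_piece_minus k \<and> z \<notin> oocf_piece_plus k" if k: "1 \<le> k" for k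
  proof -
    have "0 \<le> (real k - 1) / real k" "(2 * real k - 1) / (2 * real k + 1) \<le> real k / (real k + 1)"
      "real k / (real k + 1) < 1" "(real k - 1) / real k \<le> (2 * real k - 1) / (2 * real k + 1)"
      using k by (simp_all add: field_simps)
    then show ?thesis
      using False unfolding oocf_piece_minus_def oocf_piece_plus_def atLeastLessThan_iff
      by (intro conjI notI) linarith+
  qed
  then show ?thesis using False by simp
qed

lemma oocf_T_0 [simp]: "oocf_T 0 = 0"
  using oocf_T_small[of 0] by simp

lemma oocf_inv_minus_in_piece:
  assumes k: "1 \<le> k" and y: "0 < y" "y < 1"
  shows "mat2_moebius (oocf_inv_minus k) y \<in> oocf_piece_minus k"
proof -
  define r where "r = real k"
  have D: "0 < (r + 1) * y + r" "0 < 2 * r + 1" using k y r_def by (simp_all add: add_pos_pos)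
  have "(r * y + (r - 1)) * (2 * r + 1) < (2 * r - 1) * ((r + 1) * y + r)"
    using y by (simp add: algebra_simps)
  then have "mat2_moebius (oocf_inv_minus k) y < (2 * real k - 1) / (2 * real k + 1)"
    using D k by (simp add: oocf_inv_minus_def r_def[symmetric] divide_simps)
  then show ?thesis using mat2_moebius_oocf_inv_minus(1)[OF k, of y] y by (simp add: oocf_piece_minus_def)
qed

lemma oocf_inv_plus_in_piece:
  assumes k: "1 \<le> k" and y: "0 < y" "y < 1"
  shows "mat2_moebius (oocf_inv_plus k) y \<in> oocf_piece_plus k"
proof -
  define r where "r = real k"
  have D: "0 < r * y + (r + 1)" "0 < r + 1" using k y r_def by (simp_all add: add_pos_pos)
  have "((r - 1) * y + r) * (r + 1) < r * (r * y + (r + 1))"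
    using y by (simp add: algebra_simps)
  then have "mat2_moebius (oocf_inv_plus k) y < real k / (real k + 1)"
    using D k by (simp add: oocf_inv_plus_def r_def[symmetric] divide_simps)
  then show ?thesis using mat2_moebius_oocf_inv_plus(1)[OF k, of y] y by (simp add: oocf_piece_plus_def)
qed

lemma oocf_piece_minus_subset:
  "oocf_piece_minus k \<subseteq> {mat2_moebius (oocf_inv_minus k) 0 .. mat2_moebius (oocf_inv_minus k) 1}"
  by (auto simp: oocf_piece_minus_def oocf_inv_minus_def algebra_simps)

lemma oocf_piece_plus_subset:
  "oocf_piece_plus k \<subseteq> {mat2_moebius (oocf_inv_plus k) 1 .. mat2_moebius (oocf_inv_plus k) 0}"
  by (auto simp: oocf_piece_plus_def oocf_inv_plus_def algebra_simps)

text \<open>For a unimodular \<open>M\<close> this is \<open>|M'(y)| / M(y)\<close>, the density of the pull-back of \<open>dx/x\<close> under \<open>M\<close>.\<close>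

definition mat2_transfer_weight :: "mat2 \<Rightarrow> real \<Rightarrow> real" where
  "mat2_transfer_weight M y = 1 / (mat2_moebius M y * (mat2_denom M y)\<^sup>2)"

lemma borel_measurable_mat2_transfer_weight [measurable]:
  "mat2_transfer_weight M \<in> borel_measurable borel"
  unfolding mat2_transfer_weight_def[abs_def] by measurable

lemma mat2_transfer_weight_nonneg: "nonneg_unimodular M \<Longrightarrow> 0 \<le> y \<Longrightarrow> 0 \<le> mat2_transfer_weight M y"
  by (simp add: mat2_transfer_weight_def mat2_moebius_nonneg)

lemma nn_integral_oocf_inv_branch:
  assumes [measurable]: "A \<in> sets borel" "D \<in> sets borel"
    and B: "B \<in> oocf_inv_branches"
    and D: "D \<subseteq> {mat2_moebius B 0 .. mat2_moebius B 1} \<union> {mat2_moebius B 1 .. mat2_moebius B 0}"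
    and in_D: "\<And>y. 0 < y \<Longrightarrow> y < 1 \<Longrightarrow> mat2_moebius B y \<in> D"
  shows "(\<integral>\<^sup>+z. ennreal (1 / z) * indicator A (oocf_T z) * indicator D z \<partial>lborel) =
         (\<integral>\<^sup>+y. indicator A y * ennreal (mat2_transfer_weight B y) * indicator {0<..<1} y \<partial>lborel)"
    (is "?L = ?R")
proof -
  let ?I = "{min (mat2_moebius B 0) (mat2_moebius B 1) .. max (mat2_moebius B 0) (mat2_moebius B 1)}"
  let ?f = "\<lambda>z. ennreal (1 / z) * indicator A (oocf_T z) * indicator D z"
  have M: "nonneg_unimodular B" using B by (rule nonneg_unimodular_oocf_inv_branch)
  have "?L = (\<integral>\<^sup>+z. ?f z * indicator ?I z \<partial>lborel)"
    using D by (intro nn_integral_cong) (auto simp: indicator_def)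
  also have "\<dots> = (\<integral>\<^sup>+y. ?f (mat2_moebius B y) * ennreal (1 / (mat2_denom B y)\<^sup>2) *
                             indicator {0..1} y \<partial>lborel)"
    by (rule nn_integral_mat2_moebius_substitution[OF M]) auto
  also have "\<dots> = ?R"
  proof (rule nn_integral_cong_AE)
    have "AE y in lborel. y \<noteq> 0 \<and> y \<noteq> 1"
      using AE_lborel_singleton[of 0] AE_lborel_singleton[of 1] by eventually_elim auto
    then show "AE y in lborel. ?f (mat2_moebius B y) * ennreal (1 / (mat2_denom B y)\<^sup>2) * indicator {0..1} y
        = indicator A y * ennreal (mat2_transfer_weight B y) * indicator {0<..<1} y"
    proof eventually_elim
      case (elim y)
      show ?case
      proof (cases "0 < y \<and> y < 1")
        case True
        then have T: "oocf_T (mat2_moebius B y) = y"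
          using oocf_T_oocf_inv_branch[OF B] by simp
        then have "mat2_moebius B y \<noteq> 0" using True by auto
        then have "0 < mat2_moebius B y" "0 < mat2_denom B y"
          using mat2_moebius_nonneg[OF M] mat2_denom_pos[OF M] True by (auto simp: less_le)
        then have "ennreal (1 / mat2_moebius B y) * ennreal (1 / (mat2_denom B y)\<^sup>2) =
            ennreal (mat2_transfer_weight B y)"
          by (simp add: mat2_transfer_weight_def ennreal_mult[symmetric])
        then show ?thesis using True in_D T by (simp add: indicator_def mult.assoc)
      qed (use elim in \<open>auto simp: indicator_def\<close>)
    qed
  qed
  finally show ?thesis .
qed

lemma mat2_transfer_weight_oocf_inv_minus:
  assumes y: "0 < y"
  shows "mat2_transfer_weight (oocf_inv_minus (Suc n)) y =
    (inverse (y + (y + 1) * real n) - inverse (y + (y + 1) * real (Suc n))) / (y + 1)"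
proof -
  define a g where "a = y + (y + 1) * real n" and "g = y + (y + 1) * real (Suc n)"
  have pos: "0 < a" "0 < g" unfolding a_def g_def using y by (simp_all add: add_pos_nonneg)
  have "mat2_moebius (oocf_inv_minus (Suc n)) y = a / g" "mat2_denom (oocf_inv_minus (Suc n)) y = g"
    by (simp_all add: oocf_inv_minus_def a_def g_def algebra_simps)
  then have "mat2_transfer_weight (oocf_inv_minus (Suc n)) y = 1 / (a * g)"
    using pos by (simp add: mat2_transfer_weight_def power2_eq_square)
  also have "\<dots> = (inverse a - inverse g) / (y + 1)"
  proof -
    have "inverse a - inverse g = (g - a) / (a * g)" using pos by (simp add: field_simps)
    moreover have "g - a = y + 1" by (simp add: a_def g_def algebra_simps)
    ultimately show ?thesis using y by simp
  qed
  finally show ?thesis by (simp add: a_def g_def)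
qed

lemma mat2_transfer_weight_oocf_inv_plus:
  assumes y: "0 < y"
  shows "mat2_transfer_weight (oocf_inv_plus (Suc n)) y =
    (inverse (1 + (y + 1) * real n) - inverse (1 + (y + 1) * real (Suc n))) / (y + 1)"
proof -
  define a g where "a = 1 + (y + 1) * real n" and "g = 1 + (y + 1) * real (Suc n)"
  have pos: "0 < a" "0 < g" unfolding a_def g_def using y by (simp_all add: add_pos_nonneg)
  have "mat2_moebius (oocf_inv_plus (Suc n)) y = a / g" "mat2_denom (oocf_inv_plus (Suc n)) y = g"
    by (simp_all add: oocf_inv_plus_def a_def g_def algebra_simps)
  then have "mat2_transfer_weight (oocf_inv_plus (Suc n)) y = 1 / (a * g)"
    using pos by (simp add: mat2_transfer_weight_def power2_eq_square)
  also have "\<dots> = (inverse a - inverse g) / (y + 1)"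
  proof -
    have "inverse a - inverse g = (g - a) / (a * g)" using pos by (simp add: field_simps)
    moreover have "g - a = y + 1" by (simp add: a_def g_def algebra_simps)
    ultimately show ?thesis using y by simp
  qed
  finally show ?thesis by (simp add: a_def g_def)
qed

definition oocf_transfer_weight :: "nat \<Rightarrow> real \<Rightarrow> real" where
  "oocf_transfer_weight n y =
     mat2_transfer_weight (oocf_inv_minus (Suc n)) y + mat2_transfer_weight (oocf_inv_plus (Suc n)) y"

lemma borel_measurable_oocf_transfer_weight [measurable]:
  "oocf_transfer_weight n \<in> borel_measurable borel"
  unfolding oocf_transfer_weight_def[abs_def] by measurable

lemma oocf_transfer_weight_nonneg: "0 \<le> y \<Longrightarrow> 0 \<le> oocf_transfer_weight n y"
  using nonneg_unimodular_oocf_inv_branch[of "oocf_inv_minus (Suc n)"]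
    nonneg_unimodular_oocf_inv_branch[of "oocf_inv_plus (Suc n)"]
  by (auto simp: oocf_transfer_weight_def oocf_inv_branches_def intro!: add_nonneg_nonneg mat2_transfer_weight_nonneg)

lemma sums_oocf_transfer_weight:
  assumes y: "0 < y"
  shows "(\<lambda>n. oocf_transfer_weight n y) sums (1 / y)"
proof -
  define u v where "u n = inverse (y + (y + 1) * real n)" and "v n = inverse (1 + (y + 1) * real n)" for n
  have "u \<longlonglongrightarrow> 0" "v \<longlonglongrightarrow> 0"
    unfolding u_def v_def using y
    by (intro tendsto_inverse_0_at_top filterlim_tendsto_add_at_top[OF tendsto_const]
          filterlim_tendsto_pos_mult_at_top[OF tendsto_const] filterlim_real_sequentially; simp)+
  then have "(\<lambda>n. ((u n - u (Suc n)) + (v n - v (Suc n))) / (y + 1)) sums (((u 0 - 0) + (v 0 - 0)) / (y + 1))"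
    by (intro sums_divide sums_add telescope_sums')
  moreover have "((u 0 - 0) + (v 0 - 0)) / (y + 1) = 1 / y"
  proof -
    have "0 < y * y" using y by simp
    then have "y \<noteq> 0" "1 + y \<noteq> 0" "y + y * y \<noteq> 0" using y by linarith+
    then show ?thesis by (simp add: u_def v_def field_simps)
  qed
  ultimately show ?thesis
    using mat2_transfer_weight_oocf_inv_minus[OF y] mat2_transfer_weight_oocf_inv_plus[OF y]
    by (simp add: oocf_transfer_weight_def u_def v_def add_divide_distrib)
qed

lemma nn_integral_oocf_pieces:
  assumes [measurable]: "A \<in> sets borel"
  shows "(\<integral>\<^sup>+z. ennreal (1 / z) * indicator A (oocf_T z) * indicator (oocf_piece_minus (Suc n)) z +
              ennreal (1 / z) * indicator A (oocf_T z) * indicator (oocf_piece_plus (Suc n)) z \<partial>lborel) =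
         (\<integral>\<^sup>+y. indicator A y * ennreal (oocf_transfer_weight n y) * indicator {0<..<1} y \<partial>lborel)"
proof -
  let ?F = "\<lambda>D z. ennreal (1 / z) * indicator A (oocf_T z) * indicator D z"
  let ?G = "\<lambda>B y. indicator A y * ennreal (mat2_transfer_weight B y) * indicator {0<..<1::real} y"
  have branches: "oocf_inv_minus (Suc n) \<in> oocf_inv_branches" "oocf_inv_plus (Suc n) \<in> oocf_inv_branches"
    by (auto simp: oocf_inv_branches_def)
  have minus: "(\<integral>\<^sup>+z. ?F (oocf_piece_minus (Suc n)) z \<partial>lborel) = (\<integral>\<^sup>+y. ?G (oocf_inv_minus (Suc n)) y \<partial>lborel)"
    by (rule nn_integral_oocf_inv_branch[OF assms _ branches(1)])
       (use borel_oocf_piece oocf_piece_minus_subset[of "Suc n"] oocf_inv_minus_in_piece[of "Suc n"] in auto)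
  have plus: "(\<integral>\<^sup>+z. ?F (oocf_piece_plus (Suc n)) z \<partial>lborel) = (\<integral>\<^sup>+y. ?G (oocf_inv_plus (Suc n)) y \<partial>lborel)"
    by (rule nn_integral_oocf_inv_branch[OF assms _ branches(2)])
       (use borel_oocf_piece oocf_piece_plus_subset[of "Suc n"] oocf_inv_plus_in_piece[of "Suc n"] in auto)
  have "(\<integral>\<^sup>+z. ?F (oocf_piece_minus (Suc n)) z + ?F (oocf_piece_plus (Suc n)) z \<partial>lborel) =
      (\<integral>\<^sup>+z. ?F (oocf_piece_minus (Suc n)) z \<partial>lborel) + (\<integral>\<^sup>+z. ?F (oocf_piece_plus (Suc n)) z \<partial>lborel)"
    by (intro nn_integral_add) measurable
  also have "\<dots> = (\<integral>\<^sup>+y. ?G (oocf_inv_minus (Suc n)) y \<partial>lborel) + (\<integral>\<^sup>+y. ?G (oocf_inv_plus (Suc n)) y \<partial>lborel)"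
    by (simp only: minus plus)
  also have "\<dots> = (\<integral>\<^sup>+y. ?G (oocf_inv_minus (Suc n)) y + ?G (oocf_inv_plus (Suc n)) y \<partial>lborel)"
    by (intro nn_integral_add[symmetric]) measurable
  also have "\<dots> = (\<integral>\<^sup>+y. indicator A y * ennreal (oocf_transfer_weight n y) * indicator {0<..<1} y \<partial>lborel)"
    using branches[THEN nonneg_unimodular_oocf_inv_branch, THEN mat2_transfer_weight_nonneg]
    by (intro nn_integral_cong) (auto simp: indicator_def ennreal_plus oocf_transfer_weight_def)
  finally show ?thesis .
qed

lemma suminf_oocf_transfer_weight_AE:
  assumes "A \<subseteq> {0..1}"
  shows "AE y in lborel. (\<Sum>n. indicator A y * ennreal (oocf_transfer_weight n y) * indicator {0<..<1} y) =
                         ennreal (1 / y) * indicator A y"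
  using AE_lborel_singleton[of 0] AE_lborel_singleton[of 1]
proof eventually_elim
  case (elim y)
  show ?case
  proof (cases "0 < y \<and> y < 1")
    case True
    then have "(\<Sum>n. ennreal (oocf_transfer_weight n y)) = ennreal (1 / y)"
      using sums_oocf_transfer_weight oocf_transfer_weight_nonneg
      by (simp add: suminf_ennreal2 sums_iff less_imp_le)
    then show ?thesis using True by (simp add: ennreal_suminf_cmult mult.commute)
  next
    case False
    then have "y \<notin> A" using elim assms by auto
    then show ?thesis by simp
  qed
qed

lemma emeasure_nu_oocf_T_vimage:
  assumes "A \<in> sets nu"
  shows "emeasure nu (oocf_T -` A \<inter> space nu) = emeasure nu A"
proof -
  have A: "A \<subseteq> {0..1}" and [measurable]: "A \<in> sets borel" using assms by (auto simp: sets_nu)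
  let ?F = "\<lambda>z. ennreal (1 / z) * indicator A (oocf_T z)"
  have "oocf_T -` A \<inter> space nu \<in> sets nu" using measurable_oocf_T_nu assms by (rule measurable_sets)
  then have "emeasure nu (oocf_T -` A \<inter> space nu) =
      (\<integral>\<^sup>+z. ennreal (1 / z) * indicator (oocf_T -` A \<inter> {0..1}) z \<partial>lborel)"
    by (simp add: emeasure_nu)
  also have "\<dots> = (\<integral>\<^sup>+z. ?F z * indicator {0..<1} z \<partial>lborel)"
    by (intro nn_integral_cong_AE, use AE_lborel_singleton[of 1] in eventually_elim)
       (auto simp: indicator_def)
  also have "\<dots> = (\<integral>\<^sup>+z. (\<Sum>n. ?F z * indicator (oocf_piece_minus (Suc n)) z +
                                   ?F z * indicator (oocf_piece_plus (Suc n)) z) \<partial>lborel)"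
    by (intro nn_integral_cong) (rule suminf_oocf_pieces[symmetric])
  also have "\<dots> = (\<Sum>n. \<integral>\<^sup>+y. indicator A y * ennreal (oocf_transfer_weight n y) * indicator {0<..<1} y \<partial>lborel)"
    by (simp add: nn_integral_suminf nn_integral_oocf_pieces)
  also have "\<dots> = (\<integral>\<^sup>+y. (\<Sum>n. indicator A y * ennreal (oocf_transfer_weight n y) * indicator {0<..<1} y) \<partial>lborel)"
    by (rule nn_integral_suminf[symmetric]) measurable
  also have "\<dots> = (\<integral>\<^sup>+y. ennreal (1 / y) * indicator A y \<partial>lborel)"
    using suminf_oocf_transfer_weight_AE[OF A] by (rule nn_integral_cong_AE)
  also have "\<dots> = emeasure nu A" by (simp add: emeasure_nu assms)
  finally show ?thesis .
qed

section \<open>Ergodicity\<close>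

lemma emeasure_Int_UN_ge:
  assumes C: "countable C" "disjoint_family_on B C" "\<And>i. i \<in> C \<Longrightarrow> B i \<in> sets M" and A: "A \<in> sets M"
    and dense: "\<And>i. i \<in> C \<Longrightarrow> \<theta> * emeasure M (B i) \<le> emeasure M (A \<inter> B i)"
  shows "\<theta> * emeasure M (\<Union>i\<in>C. B i) \<le> emeasure M (A \<inter> (\<Union>i\<in>C. B i))"
proof -
  have "\<theta> * emeasure M (\<Union>i\<in>C. B i) = \<theta> * (\<integral>\<^sup>+i. emeasure M (B i) \<partial>count_space C)"
    by (simp only: emeasure_UN_countable[OF C(3,1,2)])
  also have "\<dots> = (\<integral>\<^sup>+i. \<theta> * emeasure M (B i) \<partial>count_space C)"
    by (rule nn_integral_cmult[symmetric]) simp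
  also have "\<dots> \<le> (\<integral>\<^sup>+i. emeasure M (A \<inter> B i) \<partial>count_space C)"
    using dense by (intro nn_integral_mono) simp
  also have "\<dots> = emeasure M (\<Union>i\<in>C. A \<inter> B i)"
  proof (rule emeasure_UN_countable[symmetric])
    show "disjoint_family_on (\<lambda>i. A \<inter> B i) C" using C(2) by (auto simp: disjoint_family_on_def)
  qed (use A C in auto)
  also have "(\<Union>i\<in>C. A \<inter> B i) = A \<inter> (\<Union>i\<in>C. B i)" by blast
  finally show ?thesis .
qed
lemma Vitali_covering_balls_within_open:
  fixes c :: "'i \<Rightarrow> 'a::euclidean_space"
  assumes "open U" "S \<subseteq> U"
    and fine: "\<And>x d. x \<in> S \<Longrightarrow> 0 < d \<Longrightarrow> \<exists>i\<in>K. x \<in> ball (c i) (r i) \<and> r i < d"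
  obtains C where "countable C" "C \<subseteq> K" "\<And>i. i \<in> C \<Longrightarrow> ball (c i) (r i) \<subseteq> U"
    "disjoint_family_on (\<lambda>i. ball (c i) (r i)) C" "negligible (S - (\<Union>i\<in>C. ball (c i) (r i)))"
proof -
  have cover: "\<exists>i. i \<in> {i \<in> K. ball (c i) (r i) \<subseteq> U} \<and> x \<in> ball (c i) (r i) \<and> r i < d"
    if "x \<in> S" "0 < d" for x d
  proof -
    obtain \<delta> where "0 < \<delta>" "ball x \<delta> \<subseteq> U" using assms(1,2) \<open>x \<in> S\<close> open_contains_ball by blast
    moreover obtain i where "i \<in> K" "x \<in> ball (c i) (r i)" "r i < min d (\<delta> / 2)"
      using fine[OF \<open>x \<in> S\<close>, of "min d (\<delta> / 2)"] \<open>0 < d\<close> \<open>0 < \<delta>\<close> by auto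
    moreover have "ball (c i) (r i) \<subseteq> ball x \<delta>"
    proof
      fix z assume "z \<in> ball (c i) (r i)"
      then have "dist x z \<le> dist x (c i) + dist (c i) z" "dist (c i) z < r i"
        by (auto intro: dist_triangle)
      then show "z \<in> ball x \<delta>" using calculation by (simp add: dist_commute)
    qed
    ultimately show ?thesis by auto
  qed
  obtain C where "countable C" "C \<subseteq> {i \<in> K. ball (c i) (r i) \<subseteq> U}"
    "pairwise (\<lambda>i j. disjnt (ball (c i) (r i)) (ball (c j) (r j))) C"
    "negligible (S - (\<Union>i\<in>C. ball (c i) (r i)))"
    by (rule Vitali_covering_theorem_balls[OF cover])
  then show ?thesis
    by (intro that) (auto simp: disjoint_family_on_def pairwise_def disjnt_def)
qed

lemma emeasure_lborel_eq_0_if_dense_balls: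
  fixes A S :: "'a::euclidean_space set" and c :: "'i \<Rightarrow> 'a"
  assumes [measurable]: "A \<in> sets borel" "S \<in> sets borel"
    and "A \<inter> S = {}" "emeasure lborel S < \<infinity>" "0 < \<theta>"
    and dense: "\<And>i. i \<in> K \<Longrightarrow> ennreal \<theta> * emeasure lborel (ball (c i) (r i)) \<le> emeasure lborel (A \<inter> ball (c i) (r i))"
    and fine: "\<And>x d. x \<in> S \<Longrightarrow> 0 < d \<Longrightarrow> \<exists>i\<in>K. x \<in> ball (c i) (r i) \<and> r i < d"
  shows "emeasure lborel S = 0"
proof (rule ccontr)
  assume "emeasure lborel S \<noteq> 0"
  moreover obtain s where "0 \<le> s" "emeasure lborel S = ennreal s"
    using assms(4) less_top_ennreal by (metis infinity_ennreal_def)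
  ultimately have s: "0 < s" "emeasure lborel S = ennreal s" by auto
  obtain U where U: "open U" "S \<subseteq> U" "emeasure lebesgue (U - S) < ennreal (\<theta> * s)"
    using sets_lebesgue_outer_open[of S "\<theta> * s"] s \<open>0 < \<theta>\<close> by auto
  have [measurable]: "U - S \<in> sets borel" using U(1) by simp
  then have US: "emeasure lborel (U - S) < ennreal (\<theta> * s)" using U(3) by (simp add: main_part_sets)
  obtain C where C: "countable C" "C \<subseteq> K" "\<And>i. i \<in> C \<Longrightarrow> ball (c i) (r i) \<subseteq> U"
    "disjoint_family_on (\<lambda>i. ball (c i) (r i)) C" "negligible (S - (\<Union>i\<in>C. ball (c i) (r i)))"
    using Vitali_covering_balls_within_open[OF U(1,2) fine] by blast
  let ?B = "\<Union>i\<in>C. ball (c i) (r i)"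
  have [measurable]: "?B \<in> sets borel" by (intro borel_open) auto
  have "S - ?B \<in> null_sets lborel"
    using C(5) by (simp add: negligible_iff_null_sets null_sets_completion_iff)
  then have "emeasure lborel (?B \<union> (S - ?B)) = emeasure lborel ?B"
    by (intro emeasure_Un_null_set) simp_all
  moreover have "emeasure lborel S \<le> emeasure lborel (?B \<union> (S - ?B))"
    by (intro emeasure_mono) auto
  ultimately have "emeasure lborel S \<le> emeasure lborel ?B" by simp
  have "ennreal (\<theta> * s) = ennreal \<theta> * emeasure lborel S"
    using s \<open>0 < \<theta>\<close> by (simp add: ennreal_mult)
  also have "\<dots> \<le> ennreal \<theta> * emeasure lborel ?B"
    using \<open>emeasure lborel S \<le> emeasure lborel ?B\<close> by (rule mult_left_mono) simp
  also have "\<dots> \<le> emeasure lborel (A \<inter> ?B)"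
    using C dense by (intro emeasure_Int_UN_ge) auto
  also have "\<dots> \<le> emeasure lborel (U - S)"
    using C(3) \<open>A \<inter> S = {}\<close> by (intro emeasure_mono) auto
  finally show False using US by simp
qed

text \<open>The image of \<open>(1/3, 1)\<close> under \<open>M\<close>, written as a ball for the Vitali covering theorem.\<close>

definition mat2_ball_centre :: "mat2 \<Rightarrow> real" where
  "mat2_ball_centre M = (mat2_moebius M (1/3) + mat2_moebius M 1) / 2"

definition mat2_ball_radius :: "mat2 \<Rightarrow> real" where
  "mat2_ball_radius M = \<bar>mat2_moebius M 1 - mat2_moebius M (1/3)\<bar> / 2"

abbreviation mat2_ball :: "mat2 \<Rightarrow> real set" where
  "mat2_ball M \<equiv> ball (mat2_ball_centre M) (mat2_ball_radius M)"

lemma mat2_ball_eq: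
  "mat2_ball M = {min (mat2_moebius M (1/3)) (mat2_moebius M 1) <..< max (mat2_moebius M (1/3)) (mat2_moebius M 1)}"
  unfolding mat2_ball_centre_def mat2_ball_radius_def ball_eq_greaterThanLessThan
  by (auto simp: min_def max_def abs_if field_simps)

lemma mat2_ball_radius_eq:
  assumes M: "nonneg_unimodular M"
  shows "mat2_ball_radius M = 1 / (3 * mat2_denom M 1 * mat2_denom M (1/3))"
proof -
  have pos: "0 < mat2_denom M 1" "0 < mat2_denom M (1/3)" using mat2_denom_pos[OF M] by simp_all
  then have "mat2_moebius M 1 - mat2_moebius M (1/3) = mat2_det M * (2/3) / (mat2_denom M 1 * mat2_denom M (1/3))"
    by (simp add: mat2_moebius_diff)
  then show ?thesis using pos nonneg_unimodular_det[OF M] by (auto simp: mat2_ball_radius_def abs_mult)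
qed

lemma mem_mat2_ball:
  assumes M: "nonneg_unimodular M" and t: "1/3 < t" "t < 1"
  shows "mat2_moebius M t \<in> mat2_ball M"
proof -
  have pos: "0 < mat2_denom M t" "0 < mat2_denom M 1" "0 < mat2_denom M (1/3)"
    using mat2_denom_pos[OF M] t by simp_all
  define a b where "a = (t - 1/3) / (mat2_denom M t * mat2_denom M (1/3))"
    and "b = (1 - t) / (mat2_denom M 1 * mat2_denom M t)"
  have "mat2_moebius M t - mat2_moebius M (1/3) = mat2_det M * a"
    "mat2_moebius M 1 - mat2_moebius M t = mat2_det M * b"
    using pos by (simp_all add: mat2_moebius_diff a_def b_def)
  moreover have "0 < a" "0 < b" using pos t by (simp_all add: a_def b_def)
  ultimately show ?thesis
    using nonneg_unimodular_det[OF M] unfolding mat2_ball_eq by (auto simp: min_def max_def)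
qed

lemma emeasure_lborel_Int_Icc:
  assumes "X \<in> sets borel"
  shows "emeasure lborel (X \<inter> {a..b}) = ennreal (measure lborel (X \<inter> {a..b::real}))"
proof (rule emeasure_eq_ennreal_measure)
  have "emeasure lborel (X \<inter> {a..b}) \<le> emeasure lborel {a..b}" by (intro emeasure_mono) auto
  then show "emeasure lborel (X \<inter> {a..b}) \<noteq> top"
    by (auto simp: emeasure_lborel_Icc_eq top_unique split: if_splits)
qed

lemma emeasure_mat2_ball: "emeasure lborel (mat2_ball M) = ennreal (2 * mat2_ball_radius M)"
  unfolding mat2_ball_eq by (simp add: mat2_ball_radius_def min_def max_def abs_if)

lemma emeasure_Int_mat2_ball_ge:
  assumes M: "nonneg_unimodular M" and [measurable]: "X \<in> sets borel"
    and inv: "\<And>y. y \<in> {0..1} \<Longrightarrow> mat2_moebius M y \<in> X \<longleftrightarrow> y \<in> X"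
  shows "ennreal (measure lborel (X \<inter> {1/3..1}) / 2) * emeasure lborel (mat2_ball M) \<le>
         emeasure lborel (X \<inter> mat2_ball M)"
proof -
  define m d1 d3 where "m = measure lborel (X \<inter> {1/3..1})"
    and "d1 = mat2_denom M 1" and "d3 = mat2_denom M (1/3)"
  define p q where "p = min (mat2_moebius M (1/3)) (mat2_moebius M 1)"
    and "q = max (mat2_moebius M (1/3)) (mat2_moebius M 1)"
  have pos: "0 < d1" "0 < d3" "0 \<le> m" using mat2_denom_pos[OF M] by (simp_all add: d1_def d3_def m_def)
  have "ennreal (m / d1\<^sup>2) \<le> emeasure lborel (X \<inter> {p..q})"
    using emeasure_mat2_moebius_image_ge[OF M _ _ _ inv, of "1/3" 1] pos
    by (simp add: emeasure_lborel_Int_Icc m_def d1_def p_def q_def ennreal_mult[symmetric] field_simps)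
  also have "\<dots> \<le> emeasure lborel (X \<inter> mat2_ball M \<union> {p, q})"
    by (intro emeasure_mono) (auto simp: mat2_ball_eq p_def q_def)
  also have "\<dots> = emeasure lborel (X \<inter> mat2_ball M)"
    by (intro emeasure_Un_null_set) (auto intro: countable_imp_null_set_lborel)
  finally have le: "ennreal (m / d1\<^sup>2) \<le> emeasure lborel (X \<inter> mat2_ball M)" .
  have "m / 2 * (2 * mat2_ball_radius M) \<le> m / d1\<^sup>2"
  proof -
    have "d1 \<le> 3 * d3" using mat2_denom_distortion[OF M] by (simp add: d1_def d3_def)
    then have "1 / (3 * d1 * d3) \<le> 1 / d1\<^sup>2"
      using pos by (intro divide_left_mono) (auto simp: power2_eq_square)
    then have "m * (1 / (3 * d1 * d3)) \<le> m * (1 / d1\<^sup>2)" using pos by (intro mult_left_mono) auto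
    then show ?thesis using M by (simp add: mat2_ball_radius_eq d1_def d3_def)
  qed
  moreover have "ennreal (m / 2) * emeasure lborel (mat2_ball M) = ennreal (m / 2 * (2 * mat2_ball_radius M))"
    unfolding emeasure_mat2_ball using pos by (simp add: ennreal_mult[symmetric] mat2_ball_radius_def)
  ultimately have "ennreal (m / 2) * emeasure lborel (mat2_ball M) \<le> ennreal (m / d1\<^sup>2)"
    by (simp add: ennreal_leI)
  then show ?thesis using le unfolding m_def by (rule order_trans)
qed

lemma oocf_regular_fine_cover:
  assumes x: "oocf_regular x" and "0 < d"
  shows "\<exists>M\<in>oocf_inv_words. x \<in> mat2_ball M \<and> mat2_ball_radius M < d"
proof -
  obtain N where N: "(1/4 :: real) ^ N < d" using real_arch_pow_inv[of d "1/4"] \<open>0 < d\<close> by auto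
  obtain j where j: "N \<le> oocf_visits j x" "1/3 < (oocf_T ^^ j) x"
    using oocf_regular_many_visits[OF x] by blast
  define M where "M = oocf_cylinder j x"
  have M: "M \<in> oocf_inv_words" "nonneg_unimodular M"
    using oocf_cylinder_in_words[OF x] nonneg_unimodular_oocf_inv_word M_def by auto
  have "(oocf_T ^^ j) x < 1"
    using oocf_regular_in_open_unit[OF oocf_regular_iterate[OF x]] by blast
  then have "x \<in> mat2_ball M"
    using mem_mat2_ball[OF M(2) j(2)] mat2_moebius_oocf_cylinder[OF x] M_def by simp
  moreover have "mat2_ball_radius M \<le> (1/4) ^ N"
  proof -
    define v where "v = oocf_visits j x"
    have d: "2 ^ v \<le> mat2_denom M 1" "2 ^ v \<le> mat2_denom M (1/3)"
      using mat2_denom_oocf_cylinder[OF x] M_def v_def by auto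
    have "(4::real) ^ v = 2 ^ v * 2 ^ v" by (simp flip: power_mult_distrib)
    also have "\<dots> \<le> mat2_denom M 1 * mat2_denom M (1/3)"
      using d by (intro mult_mono) (auto intro: order_trans[of 0 "2 ^ v"])
    also have "\<dots> \<le> 3 * mat2_denom M 1 * mat2_denom M (1/3)"
      using mat2_denom_pos[OF M(2)] by simp
    finally have "(4::real) ^ v \<le> 3 * mat2_denom M 1 * mat2_denom M (1/3)" .
    then have "1 / (3 * mat2_denom M 1 * mat2_denom M (1/3)) \<le> 1 / 4 ^ v"
      using mat2_denom_pos[OF M(2), of 1] mat2_denom_pos[OF M(2), of "1/3"] by (intro divide_left_mono) auto
    then have "mat2_ball_radius M \<le> (1/4) ^ v"
      by (simp add: mat2_ball_radius_eq[OF M(2)] power_one_over)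
    also have "\<dots> \<le> (1/4) ^ N" using j(1) v_def by (intro power_decreasing) auto
    finally show ?thesis .
  qed
  ultimately show ?thesis using M(1) N by force
qed

lemma emeasure_Int_upper_third_pos:
  assumes [measurable]: "X \<in> sets borel" and "X \<subseteq> {0..1}" "0 < emeasure lborel X"
    and inv: "\<And>y. y \<in> {0..1} \<Longrightarrow> mat2_moebius (oocf_inv_plus 1) y \<in> X \<longleftrightarrow> y \<in> X"
  shows "0 < emeasure lborel (X \<inter> {1/3..1})"
proof -
  have M: "nonneg_unimodular (oocf_inv_plus 1)"
    by (intro nonneg_unimodular_oocf_inv_branch) (auto simp: oocf_inv_branches_def)
  have "ennreal (1/9) * emeasure lborel X \<le> emeasure lborel (X \<inter> {1/3..1/2})"
    using emeasure_mat2_moebius_image_ge[OF M _ _ _ inv, of 0 1] \<open>X \<subseteq> {0..1}\<close>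
    by (simp add: oocf_inv_plus_def Int_absorb2)
  also have "\<dots> \<le> emeasure lborel (X \<inter> {1/3..1})" by (intro emeasure_mono) auto
  finally have "ennreal (1/9) * emeasure lborel X \<le> emeasure lborel (X \<inter> {1/3..1})" .
  moreover have "0 < ennreal (1/9) * emeasure lborel X"
    using \<open>0 < emeasure lborel X\<close> by (simp add: ennreal_zero_less_mult_iff)
  ultimately show ?thesis by (rule less_le_trans[rotated])
qed

lemma emeasure_lborel_oocf_invariant:
  assumes [measurable]: "A \<in> sets borel" and "A \<subseteq> {0..1}" "0 < emeasure lborel A"
    and inv: "\<And>x. x \<in> {0..1} \<Longrightarrow> oocf_T x \<in> A \<longleftrightarrow> x \<in> A"
  shows "emeasure lborel ({0..1} - A) = 0"
proof -
  define E where "E = {x \<in> {0..1}. \<not> oocf_regular x}"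
  have E: "E \<in> null_sets lborel"
    using countable_not_oocf_regular by (simp add: E_def countable_imp_null_set_lborel)
  define \<theta> where "\<theta> = measure lborel (A \<inter> {1/3..1}) / 2"
  have "0 < emeasure lborel (A \<inter> {1/3..1})"
    using emeasure_Int_upper_third_pos assms oocf_inv_word_invariant[OF inv]
          oocf_inv_words_mult[OF _ oocf_inv_words_id, of "oocf_inv_plus 1"]
    by (force simp: oocf_inv_branches_def oocf_inv_plus_def)
  then have "0 < \<theta>" by (simp add: \<theta>_def emeasure_lborel_Int_Icc)
  have "emeasure lborel ({0..1} - A - E) = 0"
  proof (rule emeasure_lborel_eq_0_if_dense_balls[OF _ _ _ _ \<open>0 < \<theta>\<close>])
    show "ennreal \<theta> * emeasure lborel (mat2_ball M) \<le> emeasure lborel (A \<inter> mat2_ball M)"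
      if "M \<in> oocf_inv_words" for M
      using emeasure_Int_mat2_ball_ge[OF nonneg_unimodular_oocf_inv_word[OF that] _
          oocf_inv_word_invariant[OF inv that]]
      by (simp add: \<theta>_def)
    show "\<exists>M\<in>oocf_inv_words. x \<in> mat2_ball M \<and> mat2_ball_radius M < d"
      if "x \<in> {0..1} - A - E" "0 < d" for x d
      using that oocf_regular_fine_cover by (auto simp: E_def)
    have "emeasure lborel ({0..1} - A - E) \<le> emeasure lborel {0..1::real}"
      using E by (intro emeasure_mono) auto
    then show "emeasure lborel ({0..1} - A - E) < \<infinity>"
      using le_less_trans[OF _ ennreal_less_top[of 1]] by simp
  qed (use E in auto)
  then show ?thesis
    using E by (metis Diff_Diff_Int Int_commute emeasure_Diff_null_set sets.Diff sets_lborel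
        borel_closed closed_atLeastAtMost assms(1))
qed

lemma ergodic_map_nu_oocf_T: "ergodic_map nu oocf_T"
  unfolding ergodic_map_def
proof (intro ballI impI)
  fix A assume A: "A \<in> sets nu" and inv: "oocf_T -` A \<inter> space nu = A"
  have A_borel: "A \<in> sets borel" and A_unit: "A \<subseteq> {0..1}" using A by (auto simp: sets_nu)
  have "oocf_T x \<in> A \<longleftrightarrow> x \<in> A" if "x \<in> {0..1}" for x
  proof -
    have "x \<in> oocf_T -` A \<inter> space nu \<longleftrightarrow> oocf_T x \<in> A" using that by simp
    then show ?thesis unfolding inv by simp
  qed
  then have "emeasure lborel A = 0 \<or> emeasure lborel ({0..1} - A) = 0"
    using emeasure_lborel_oocf_invariant[OF A_borel A_unit] by (auto simp: zero_less_iff_neq_zero)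
  then show "emeasure nu A = 0 \<or> emeasure nu (space nu - A) = 0"
    using A by (auto intro!: emeasure_nu_eq_0 simp: sets_nu)
qed

theorem proposition2p2:
  shows "measure_preserving_map nu oocf_T \<and> emeasure nu {0..1} = \<infinity> \<and> ergodic_map nu oocf_T"
  using measurable_oocf_T_nu emeasure_nu_oocf_T_vimage emeasure_nu_unit_interval ergodic_map_nu_oocf_T
  by (simp add: measure_preserving_map_def)

end
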